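(* If $a>0$ and $1<q<p$, then for every $\lambda>0$ the function $u=0$ is a strict local minimizer of $I^-_{\lambda,s}$ in $X_p^s$.
   Context: $\Omega\subset\mathbb{R}^N$ bounded smooth domain, $s\in(0,1)$, $p>1$, $N>sp$. $X_p^s=\{u\in W^{s,p}(\mathbb{R}^N): u=0 \text{ a.e. in } \mathbb{R}^N\setminus\Omega\}$ with norm $\|u\|_{X_p^s}=\big(\int_{\mathbb{R}^{2N}}\frac{|u(x)-u(y)|^p}{|x-y|^{N+sp}}dxdy\big)^{1/p}$. $u^-=\min\{u,0\}$ and $I^-_{\lambda,s}(u)=\frac1p\|u\|_{X_p^s}^p+\frac\lambda q\int_\Omega|u^-|^q-\frac ap\int_\Omega|u^-|^p$. *)

theory Defs
  imports "HOL-Analysis.Analysis"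
begin

text \<open>Euclidean space R^N is modelled by a euclidean_space type 'a, N = DIM('a).\<close>

definition gagliardo :: "real \<Rightarrow> real \<Rightarrow> ('a::euclidean_space \<Rightarrow> real) \<Rightarrow> ennreal" where
  "gagliardo s p u =
     (\<integral>\<^sup>+ z. ennreal (\<bar>u (fst z) - u (snd z)\<bar> powr p
                    / norm (fst z - snd z) powr (real DIM('a) + s * p))
        \<partial>(lebesgue \<Otimes>\<^sub>M lebesgue))"

definition Xsp :: "real \<Rightarrow> real \<Rightarrow> 'a::euclidean_space set \<Rightarrow> ('a \<Rightarrow> real) set" where
  "Xsp s p \<Omega> = {u. u \<in> borel_measurable lebesgue
                    \<and> (\<integral>\<^sup>+ x. ennreal (\<bar>u x\<bar> powr p) \<partial>lebesgue) < \<infinity>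
                    \<and> gagliardo s p u < \<infinity>
                    \<and> (AE x in lebesgue. x \<notin> \<Omega> \<longrightarrow> u x = 0)}"

definition Xnorm :: "real \<Rightarrow> real \<Rightarrow> ('a::euclidean_space \<Rightarrow> real) \<Rightarrow> real" where
  "Xnorm s p u = enn2real (gagliardo s p u) powr (1 / p)"

definition neg_part :: "real \<Rightarrow> real" where
  "neg_part t = min t 0"

definition Iminus :: "real \<Rightarrow> real \<Rightarrow> real \<Rightarrow> real \<Rightarrow> real \<Rightarrow> 'a::euclidean_space set
                      \<Rightarrow> ('a \<Rightarrow> real) \<Rightarrow> real" where
  "Iminus s p q a lam \<Omega> u =
     (1 / p) * Xnorm s p u powr p
     + (lam / q) * (LINT x:\<Omega>|lebesgue. \<bar>neg_part (u x)\<bar> powr q)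
     - (a / p) * (LINT x:\<Omega>|lebesgue. \<bar>neg_part (u x)\<bar> powr p)"

end

theory Submission
  imports Defs
begin

(* Write [u] for the Gagliardo seminorm, so that I(u) = [u]^p/p + lam/q int |u^-|^q - a/p int |u^-|^p.
   Split |u^-| at a level M > 0:  |u^-|^p <= 2^p M^(p-q) |u^-|^q + 2^p h^p  with  h = (|u^-| - M)^+.
   Choosing M with a 2^p M^(p-q)/p = lam/q, the first term is absorbed by the lam-term.
   The function h is supported in {u < -M}, whose measure is at most C [u]^p / M^p by a
   Poincare inequality on the bounded set Omega, so for [u] small it is at most half the
   measure of a ball B_rho.  A function vanishing outside such a set satisfies
   int |h|^p <= 2 rho^(sp) / |B_1| [h]^p: where h(x) <> 0, the zeros of h in B_rho(x) already
   contribute |h(x)|^p |B_rho| / (2 rho^(N+sp)) to the kernel integral.  As [h] <= [u],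
   choosing rho small bounds the a-term by [u]^p/(2p), whence I(u) >= [u]^p/(2p) > 0 = I(0). *)

lemma exists_pos_powr_eq:
  fixes c e :: real
  assumes "0 < c" and "e \<noteq> 0"
  obtains t where "0 < t" and "t powr e = c"
  using assms by (intro that[of "c powr (1 / e)"]) (simp_all add: powr_powr)

lemma powr_le_split_at_level:
  fixes w M p q :: real
  assumes w: "0 \<le> w" and M: "0 < M" and q: "0 < q" and qp: "q < p"
  shows "w powr p \<le> 2 powr p * M powr (p - q) * w powr q + 2 powr p * max (w - M) 0 powr p"
proof -
  have p: "p > 0" using q qp by simp
  have one: "1 \<le> 2 powr p" using p by (simp add: ge_one_powr_ge_zero)
  have t1: "0 \<le> 2 powr p * M powr (p - q) * w powr q" by simp
  have t2: "0 \<le> 2 powr p * max (w - M) 0 powr p" by simp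
  consider "w \<le> M" | "M < w \<and> w \<le> 2 * M" | "2 * M < w" by linarith
  then show ?thesis
  proof cases
    case 1
    have "w powr p = w powr (p - q) * w powr q" by (simp flip: powr_add)
    also have "\<dots> \<le> M powr (p - q) * w powr q"
      using 1 w qp by (intro mult_right_mono powr_mono2) auto
    also have "\<dots> \<le> 2 powr p * M powr (p - q) * w powr q"
      using mult_right_mono[OF one, of "M powr (p - q) * w powr q"] by (simp add: mult.assoc)
    finally show ?thesis using t2 by linarith
  next
    case 2
    have "w powr p \<le> (2 * M) powr p" using 2 w p by (intro powr_mono2) auto
    also have "\<dots> = 2 powr p * (M powr (p - q) * M powr q)"
      using M by (simp add: powr_mult flip: powr_add)
    also have "\<dots> \<le> 2 powr p * (M powr (p - q) * w powr q)"
      using 2 M q by (intro mult_left_mono powr_mono2) auto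
    finally show ?thesis using t2 by (simp add: mult.assoc add_increasing2)
  next
    case 3
    have "w powr p \<le> (2 * (w - M)) powr p" using 3 w p M by (intro powr_mono2) auto
    also have "\<dots> = 2 powr p * max (w - M) 0 powr p" using 3 M powr_mult[of 2 "w - M" p] by simp
    finally show ?thesis using t1 by linarith
  qed
qed

lemma emeasure_diff_ge_half:
  assumes "A \<in> sets M" and "S \<in> sets M"
    and "emeasure M A = ennreal V" and "emeasure M S \<le> ennreal (V / 2)" and "0 \<le> V"
  shows "ennreal (V / 2) \<le> emeasure M (A - S)"
proof -
  have "ennreal (V / 2) + ennreal (V / 2) = emeasure M A"
    using assms by (simp flip: ennreal_plus)
  also have "\<dots> \<le> emeasure M ((A - S) \<union> S)"
    using assms by (intro emeasure_mono) auto
  also have "\<dots> \<le> emeasure M (A - S) + ennreal (V / 2)"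
    using assms by (intro order.trans[OF emeasure_subadditive] add_left_mono) auto
  finally show ?thesis
    by (simp add: add.commute ennreal_add_left_cancel_le del: ennreal_plus)
qed

lemma emeasure_less_neg_level_le:
  fixes u :: "'b \<Rightarrow> real"
  assumes [measurable]: "u \<in> borel_measurable M" and "0 < c" and "0 \<le> p"
  shows "ennreal (c powr p) * emeasure M {x\<in>space M. u x < - c} \<le> (\<integral>\<^sup>+x. ennreal (\<bar>u x\<bar> powr p) \<partial>M)"
proof -
  have "ennreal (c powr p) * emeasure M {x\<in>space M. u x < - c}
      = (\<integral>\<^sup>+x. ennreal (c powr p) * indicator {x\<in>space M. u x < - c} x \<partial>M)"
    by (simp add: nn_integral_cmult_indicator)
  also have "\<dots> \<le> (\<integral>\<^sup>+x. ennreal (\<bar>u x\<bar> powr p) \<partial>M)"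
    using assms by (intro nn_integral_mono) (auto split: split_indicator intro!: ennreal_leI powr_mono2)
  finally show ?thesis .
qed

lemma integrable_powr_abs_bounded:
  fixes g :: "'b \<Rightarrow> real"
  assumes [measurable]: "g \<in> borel_measurable M"
    and bound: "(\<integral>\<^sup>+x. ennreal (\<bar>g x\<bar> powr p) \<partial>M) \<le> ennreal C" and "0 \<le> C"
  shows "integrable M (\<lambda>x. \<bar>g x\<bar> powr p)" and "(LINT x|M. \<bar>g x\<bar> powr p) \<le> C"
proof -
  show "integrable M (\<lambda>x. \<bar>g x\<bar> powr p)"
    using bound by (intro integrableI_nonneg) (auto simp: top.not_eq_extremum intro: le_less_trans)
  have "(LINT x|M. \<bar>g x\<bar> powr p) = enn2real (\<integral>\<^sup>+x. ennreal (\<bar>g x\<bar> powr p) \<partial>M)"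
    by (intro integral_eq_nn_integral) auto
  also have "\<dots> \<le> C"
    using bound \<open>0 \<le> C\<close> by (rule enn2real_leI[rotated])
  finally show "(LINT x|M. \<bar>g x\<bar> powr p) \<le> C" .
qed

lemma set_integrable_powr_abs:
  fixes g :: "'b \<Rightarrow> real"
  assumes [measurable]: "g \<in> borel_measurable M" and "A \<in> fmeasurable M"
    and "(\<integral>\<^sup>+x. ennreal (\<bar>g x\<bar> powr p) \<partial>M) < \<infinity>" and "0 \<le> r" and "r \<le> p"
  shows "set_integrable M A (\<lambda>x. \<bar>g x\<bar> powr r)"
proof (rule set_integrable_bound)
  have "integrable M (\<lambda>x. \<bar>g x\<bar> powr p)"
    using assms by (intro integrableI_nonneg) auto
  from integrable_mult_indicator[OF fmeasurableD[OF \<open>A \<in> fmeasurable M\<close>] this]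
  have "integrable M (\<lambda>x. indicator A x * \<bar>g x\<bar> powr p)"
    by simp
  moreover have "integrable M (indicator A :: 'b \<Rightarrow> real)"
    using fmeasurableD[OF \<open>A \<in> fmeasurable M\<close>] fmeasurableD2[OF \<open>A \<in> fmeasurable M\<close>]
    by (intro integrable_real_indicator) (auto simp: less_top)
  ultimately show "set_integrable M A (\<lambda>x. 1 + \<bar>g x\<bar> powr p)"
    unfolding set_integrable_def by (simp add: distrib_left)
  show "set_borel_measurable M A (\<lambda>x. \<bar>g x\<bar> powr r)"
    using assms unfolding set_borel_measurable_def by measurable
  have "\<bar>g x\<bar> powr r \<le> 1 + \<bar>g x\<bar> powr p" for x
  proof (cases "\<bar>g x\<bar> \<le> 1")
    case True
    then have "\<bar>g x\<bar> powr r \<le> 1 powr r"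
      using \<open>0 \<le> r\<close> by (intro powr_mono2) auto
    then show ?thesis
      by (intro add_increasing2) auto
  next
    case False
    then have "\<bar>g x\<bar> powr r \<le> \<bar>g x\<bar> powr p"
      using \<open>r \<le> p\<close> by (intro powr_mono) auto
    then show ?thesis
      by linarith
  qed
  then show "AE x in M. x \<in> A \<longrightarrow> norm (\<bar>g x\<bar> powr r) \<le> norm (1 + \<bar>g x\<bar> powr p)"
    by (auto intro!: AE_I2)
qed

lemma sigma_finite_lebesgue: "sigma_finite_measure (lebesgue :: 'a::euclidean_space measure)"
proof -
  obtain A :: "'a set set" where A: "countable A" "A \<subseteq> sets lborel" "\<Union>A = space lborel"
      "\<forall>a\<in>A. emeasure lborel a \<noteq> \<infinity>"
    using sigma_finite_lborel unfolding sigma_finite_measure_def by blast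
  then show ?thesis
    unfolding sigma_finite_measure_def by (intro exI[of _ A]) (auto simp: emeasure_completion)
qed

lemma borel_measurable_ident_lebesgue [measurable]:
  "(\<lambda>x::'a::euclidean_space. x) \<in> borel_measurable lebesgue"
  by (simp add: measurable_completion)

lemma measurable_fst_lebesgue [measurable]:
  "fst \<in> borel_measurable (lebesgue \<Otimes>\<^sub>M (lebesgue :: 'a::euclidean_space measure))"
  using measurable_compose[OF measurable_fst borel_measurable_ident_lebesgue] by simp

lemma measurable_snd_lebesgue [measurable]:
  "snd \<in> borel_measurable (lebesgue \<Otimes>\<^sub>M (lebesgue :: 'a::euclidean_space measure))"
  using measurable_compose[OF measurable_snd borel_measurable_ident_lebesgue] by simp

lemma emeasure_lebesgue_ball:
  "0 \<le> r \<Longrightarrow>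
    emeasure lebesgue (ball (x::'a::euclidean_space) r) = ennreal (unit_ball_vol DIM('a) * r ^ DIM('a))"
  using emeasure_ball[of r x] by (simp add: emeasure_completion)

lemma borel_measurable_neg_part [measurable]: "neg_part \<in> borel_measurable borel"
  unfolding neg_part_def by measurable

lemma abs_neg_part_le: "\<bar>neg_part t\<bar> \<le> \<bar>t\<bar>"
  by (simp add: neg_part_def)

lemma gagliardo_iterated:
  fixes f :: "'a::euclidean_space \<Rightarrow> real"
  assumes [measurable]: "f \<in> borel_measurable lebesgue"
  shows "gagliardo s p f = (\<integral>\<^sup>+x. \<integral>\<^sup>+y. ennreal (\<bar>f x - f y\<bar> powr p
            / norm (x - y) powr (real DIM('a) + s * p)) \<partial>lebesgue \<partial>lebesgue)"
  unfolding gagliardo_def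
  by (subst sigma_finite_measure.nn_integral_fst[OF sigma_finite_lebesgue, symmetric]) simp_all

lemma gagliardo_mono:
  fixes f g :: "'a::euclidean_space \<Rightarrow> real"
  assumes "\<And>x y. \<bar>g x - g y\<bar> \<le> \<bar>f x - f y\<bar>" and "0 < p"
  shows "gagliardo s p g \<le> gagliardo s p f"
  unfolding gagliardo_def
  using assms by (intro nn_integral_mono ennreal_leI divide_right_mono powr_mono2) auto

lemma Xnorm_powr:
  "0 < p \<Longrightarrow> Xnorm s p u powr p = enn2real (gagliardo s p u)"
  by (simp add: Xnorm_def powr_powr)

lemma Iminus_zero: "Iminus s p q a lam \<Omega> (\<lambda>x. 0) = 0"
  by (simp add: Iminus_def Xnorm_def gagliardo_def neg_part_def)

lemma powr_le_gagliardo_slice: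
  fixes f :: "'a::euclidean_space \<Rightarrow> real" and \<rho> :: real
  defines "V \<equiv> unit_ball_vol DIM('a) * \<rho> ^ DIM('a)"
  assumes [measurable]: "f \<in> borel_measurable lebesgue" and "0 < \<rho>" and "0 \<le> b"
    and small: "emeasure lebesgue {y. f y \<noteq> 0} \<le> ennreal (V / 2)"
  shows "ennreal (\<bar>f x\<bar> powr p) \<le> ennreal (2 * \<rho> powr b / V)
           * (\<integral>\<^sup>+y. ennreal (\<bar>f x - f y\<bar> powr p / norm (x - y) powr b) \<partial>lebesgue)"
proof (cases "f x = 0")
  case False
  define S where "S = {y. f y \<noteq> 0}"
  define B where "B = ball x \<rho> - S"
  have "{y \<in> space lebesgue. f y \<noteq> 0} \<in> sets lebesgue"
    by measurable
  then have S_sets: "S \<in> sets lebesgue"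
    by (simp add: S_def)
  have V_pos: "0 < V"
    unfolding V_def using \<open>0 < \<rho>\<close> by simp
  have "emeasure lebesgue (ball x \<rho>) = ennreal V"
    unfolding V_def using \<open>0 < \<rho>\<close> by (intro emeasure_lebesgue_ball) simp
  then have B_large: "ennreal (V / 2) \<le> emeasure lebesgue B"
    unfolding B_def using S_sets small V_pos
    by (intro emeasure_diff_ge_half) (auto simp: S_def)
  have B_lower: "\<bar>f x\<bar> powr p / \<rho> powr b \<le> \<bar>f x - f y\<bar> powr p / norm (x - y) powr b" if "y \<in> B" for y
  proof -
    have "f y = 0" and "norm (x - y) < \<rho>"
      using that by (auto simp: B_def S_def dist_norm)
    moreover have "0 < norm (x - y)"
      using False \<open>f y = 0\<close> by auto
    ultimately show ?thesis
      using \<open>0 \<le> b\<close> by (auto intro!: divide_left_mono powr_mono2 mult_pos_pos)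
  qed
  have "ennreal (\<bar>f x\<bar> powr p / \<rho> powr b) * ennreal (V / 2)
      \<le> ennreal (\<bar>f x\<bar> powr p / \<rho> powr b) * emeasure lebesgue B"
    using B_large by (intro mult_left_mono) auto
  also have "\<dots> = (\<integral>\<^sup>+y. ennreal (\<bar>f x\<bar> powr p / \<rho> powr b) * indicator B y \<partial>lebesgue)"
    using S_sets by (intro nn_integral_cmult_indicator[symmetric]) (auto simp: B_def)
  also have "\<dots> \<le> (\<integral>\<^sup>+y. ennreal (\<bar>f x - f y\<bar> powr p / norm (x - y) powr b) \<partial>lebesgue)"
    using B_lower by (intro nn_integral_mono) (auto split: split_indicator intro: ennreal_leI)
  finally have slice: "ennreal (\<bar>f x\<bar> powr p / \<rho> powr b) * ennreal (V / 2)
      \<le> (\<integral>\<^sup>+y. ennreal (\<bar>f x - f y\<bar> powr p / norm (x - y) powr b) \<partial>lebesgue)" .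
  have "ennreal (\<bar>f x\<bar> powr p)
      = ennreal (2 * \<rho> powr b / V) * (ennreal (\<bar>f x\<bar> powr p / \<rho> powr b) * ennreal (V / 2))"
    using V_pos \<open>0 < \<rho>\<close> by (simp add: ennreal_mult'[symmetric] ennreal_mult[symmetric] field_simps)
  also have "\<dots> \<le> ennreal (2 * \<rho> powr b / V)
      * (\<integral>\<^sup>+y. ennreal (\<bar>f x - f y\<bar> powr p / norm (x - y) powr b) \<partial>lebesgue)"
    using slice by (intro mult_left_mono) auto
  finally show ?thesis .
qed simp

lemma nn_integral_powr_le_gagliardo_small_support:
  fixes f :: "'a::euclidean_space \<Rightarrow> real"
  assumes [measurable]: "f \<in> borel_measurable lebesgue" and "0 < \<rho>" and "0 \<le> s * p"
    and "emeasure lebesgue {x. f x \<noteq> 0} \<le> ennreal (unit_ball_vol DIM('a) * \<rho> ^ DIM('a) / 2)"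
  shows "(\<integral>\<^sup>+x. ennreal (\<bar>f x\<bar> powr p) \<partial>lebesgue)
           \<le> ennreal (2 * \<rho> powr (s * p) / unit_ball_vol DIM('a)) * gagliardo s p f"
proof -
  define b where "b = real DIM('a) + s * p"
  define V where "V = unit_ball_vol DIM('a) * \<rho> ^ DIM('a)"
  define F where "F = (\<lambda>x y. ennreal (\<bar>f x - f y\<bar> powr p / norm (x - y) powr b))"
  have F_measurable: "(\<lambda>z. F (fst z) (snd z)) \<in> borel_measurable (lebesgue \<Otimes>\<^sub>M lebesgue)"
    unfolding F_def by measurable
  have "(\<integral>\<^sup>+x. ennreal (\<bar>f x\<bar> powr p) \<partial>lebesgue)
      \<le> (\<integral>\<^sup>+x. ennreal (2 * \<rho> powr b / V) * (\<integral>\<^sup>+y. F x y \<partial>lebesgue) \<partial>lebesgue)"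
    using assms unfolding F_def V_def b_def
    by (intro nn_integral_mono powr_le_gagliardo_slice) auto
  also have "\<dots> = ennreal (2 * \<rho> powr b / V) * gagliardo s p f"
    using sigma_finite_measure.borel_measurable_nn_integral_fst[OF sigma_finite_lebesgue F_measurable]
    by (simp add: nn_integral_cmult gagliardo_iterated F_def b_def)
  also have "2 * \<rho> powr b / V = 2 * \<rho> powr (s * p) / unit_ball_vol DIM('a)"
    using \<open>0 < \<rho>\<close> by (simp add: b_def V_def powr_add powr_realpow)
  finally show ?thesis .
qed

lemma nn_integral_powr_le_gagliardo_bounded_support:
  fixes f :: "'a::euclidean_space \<Rightarrow> real"
  assumes [measurable]: "f \<in> borel_measurable lebesgue"
    and "AE x in lebesgue. x \<notin> \<Omega> \<longrightarrow> f x = 0" and "\<Omega> \<subseteq> ball 0 d" and "0 < d" and "0 \<le> s * p"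
  shows "(\<integral>\<^sup>+x. ennreal (\<bar>f x\<bar> powr p) \<partial>lebesgue)
           \<le> ennreal (2 * (2 * d) powr (s * p) / unit_ball_vol DIM('a)) * gagliardo s p f"
proof (rule nn_integral_powr_le_gagliardo_small_support)
  have "(2::real) ^ 1 \<le> 2 ^ DIM('a)"
    using DIM_positive[where 'a='a] by (intro power_increasing) auto
  then have "2 * d ^ DIM('a) \<le> (2 * d) ^ DIM('a)"
    using \<open>0 < d\<close> by (simp add: power_mult_distrib)
  then have "unit_ball_vol DIM('a) * d ^ DIM('a) \<le> unit_ball_vol DIM('a) * (2 * d) ^ DIM('a) / 2"
    by simp
  moreover have "emeasure lebesgue {x. f x \<noteq> 0} \<le> emeasure lebesgue (ball (0::'a) d)"
    using assms by (intro emeasure_mono_AE) (auto elim!: eventually_mono)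
  moreover have "emeasure lebesgue (ball (0::'a) d) = ennreal (unit_ball_vol DIM('a) * d ^ DIM('a))"
    using \<open>0 < d\<close> by (intro emeasure_lebesgue_ball) simp
  ultimately show "emeasure lebesgue {x. f x \<noteq> 0}
      \<le> ennreal (unit_ball_vol DIM('a) * (2 * d) ^ DIM('a) / 2)"
    by (metis ennreal_leI order.trans)
qed (use assms in auto)

lemma emeasure_less_neg_level_le_gagliardo:
  fixes u :: "'a::euclidean_space \<Rightarrow> real" and d s p :: real
  defines "C \<equiv> 2 * (2 * d) powr (s * p) / unit_ball_vol DIM('a)"
  assumes "u \<in> Xsp s p \<Omega>" and "\<Omega> \<subseteq> ball 0 d" and "0 < d" and "0 < M" and "0 < p" and "0 \<le> s * p"
  shows "emeasure lebesgue {x. u x < - M} \<le> ennreal (C * enn2real (gagliardo s p u) / M powr p)"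
proof -
  have [measurable]: "u \<in> borel_measurable lebesgue" and "gagliardo s p u < \<infinity>"
    and u_outside: "AE x in lebesgue. x \<notin> \<Omega> \<longrightarrow> u x = 0"
    using \<open>u \<in> Xsp s p \<Omega>\<close> unfolding Xsp_def by auto
  have C_pos: "0 < C"
    unfolding C_def using \<open>0 < d\<close> by simp
  have "ennreal (M powr p) * emeasure lebesgue {x. u x < - M}
      \<le> (\<integral>\<^sup>+x. ennreal (\<bar>u x\<bar> powr p) \<partial>lebesgue)"
    using emeasure_less_neg_level_le[of u lebesgue M p] \<open>0 < M\<close> \<open>0 < p\<close> by simp
  also have "\<dots> \<le> ennreal C * gagliardo s p u"
    unfolding C_def using assms u_outside by (intro nn_integral_powr_le_gagliardo_bounded_support) auto
  also have "\<dots> = ennreal (C * enn2real (gagliardo s p u))"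
    using C_pos \<open>gagliardo s p u < \<infinity>\<close> by (simp add: ennreal_mult)
  also have "\<dots> = ennreal (M powr p) * ennreal (C * enn2real (gagliardo s p u) / M powr p)"
    using C_pos \<open>0 < M\<close> by (simp flip: ennreal_mult)
  finally show ?thesis
    using \<open>0 < M\<close> by (simp add: ennreal_mult_le_mult_iff)
qed

lemma integral_excess_powr_le_gagliardo:
  fixes u :: "'a::euclidean_space \<Rightarrow> real" and \<rho> s p :: real
  defines "K \<equiv> 2 * \<rho> powr (s * p) / unit_ball_vol DIM('a)"
  assumes [measurable]: "u \<in> borel_measurable lebesgue" and "gagliardo s p u < \<infinity>"
    and "0 < p" and "0 < \<rho>" and "0 \<le> s * p"
    and small: "emeasure lebesgue {x. u x < - M} \<le> ennreal (unit_ball_vol DIM('a) * \<rho> ^ DIM('a) / 2)"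
  shows "integrable lebesgue (\<lambda>x. max (- u x - M) 0 powr p)"
    and "(LINT x|lebesgue. max (- u x - M) 0 powr p) \<le> K * enn2real (gagliardo s p u)"
proof -
  define h where "h = (\<lambda>x. max (- u x - M) 0)"
  have K_pos: "0 < K"
    unfolding K_def using \<open>0 < \<rho>\<close> by simp
  have [measurable]: "h \<in> borel_measurable lebesgue"
    unfolding h_def by measurable
  have "{x. h x \<noteq> 0} = {x. u x < - M}"
    unfolding h_def by auto
  then have "(\<integral>\<^sup>+x. ennreal (\<bar>h x\<bar> powr p) \<partial>lebesgue) \<le> ennreal K * gagliardo s p h"
    unfolding K_def using small \<open>0 < \<rho>\<close> \<open>0 \<le> s * p\<close>
    by (intro nn_integral_powr_le_gagliardo_small_support) auto
  also have "\<dots> \<le> ennreal K * gagliardo s p u"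
    using \<open>0 < p\<close> by (intro mult_left_mono gagliardo_mono) (auto simp: h_def)
  also have "\<dots> = ennreal (K * enn2real (gagliardo s p u))"
    using \<open>gagliardo s p u < \<infinity>\<close> K_pos by (simp add: ennreal_mult)
  finally have "integrable lebesgue (\<lambda>x. \<bar>h x\<bar> powr p)"
    and "(LINT x|lebesgue. \<bar>h x\<bar> powr p) \<le> K * enn2real (gagliardo s p u)"
    using K_pos by (auto intro!: integrable_powr_abs_bounded)
  moreover have "\<bar>h x\<bar> = max (- u x - M) 0" for x
    by (simp add: h_def)
  ultimately show "integrable lebesgue (\<lambda>x. max (- u x - M) 0 powr p)"
    and "(LINT x|lebesgue. max (- u x - M) 0 powr p) \<le> K * enn2real (gagliardo s p u)"
    by simp_all
qed

lemma set_integral_neg_part_powr_le: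
  fixes u :: "'a::euclidean_space \<Rightarrow> real" and \<rho> s p :: real
  defines "K \<equiv> 2 * \<rho> powr (s * p) / unit_ball_vol DIM('a)"
  assumes [measurable]: "u \<in> borel_measurable lebesgue" and "\<Omega> \<in> lmeasurable"
    and u_finite: "(\<integral>\<^sup>+x. ennreal (\<bar>u x\<bar> powr p) \<partial>lebesgue) < \<infinity>"
    and "gagliardo s p u < \<infinity>"
    and "0 < M" and "0 < q" and "q < p" and "0 < \<rho>" and "0 \<le> s * p"
    and small: "emeasure lebesgue {x. u x < - M} \<le> ennreal (unit_ball_vol DIM('a) * \<rho> ^ DIM('a) / 2)"
  shows "(LINT x:\<Omega>|lebesgue. \<bar>neg_part (u x)\<bar> powr p)
           \<le> 2 powr p * M powr (p - q) * (LINT x:\<Omega>|lebesgue. \<bar>neg_part (u x)\<bar> powr q)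
             + 2 powr p * K * enn2real (gagliardo s p u)"
proof -
  define h where "h = (\<lambda>x. max (- u x - M) 0 powr p)"
  define c where "c = 2 powr p * M powr (p - q)"
  have h_int: "integrable lebesgue h"
    and h_le: "(LINT x|lebesgue. h x) \<le> K * enn2real (gagliardo s p u)"
    unfolding h_def K_def using assms by (intro integral_excess_powr_le_gagliardo; simp)+
  have "(\<integral>\<^sup>+x. ennreal (\<bar>neg_part (u x)\<bar> powr p) \<partial>lebesgue)
      \<le> (\<integral>\<^sup>+x. ennreal (\<bar>u x\<bar> powr p) \<partial>lebesgue)"
    using \<open>0 < q\<close> \<open>q < p\<close> abs_neg_part_le by (intro nn_integral_mono ennreal_leI powr_mono2) auto
  then have "(\<integral>\<^sup>+x. ennreal (\<bar>neg_part (u x)\<bar> powr p) \<partial>lebesgue) < \<infinity>"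
    using u_finite by (rule le_less_trans)
  then have w_int: "set_integrable lebesgue \<Omega> (\<lambda>x. \<bar>neg_part (u x)\<bar> powr r)" if "0 \<le> r" "r \<le> p" for r
    using that \<open>\<Omega> \<in> lmeasurable\<close> by (intro set_integrable_powr_abs) auto
  have h_set_int: "set_integrable lebesgue \<Omega> h"
    unfolding set_integrable_def using h_int \<open>\<Omega> \<in> lmeasurable\<close> by (intro integrable_mult_indicator) auto
  have "(LINT x:\<Omega>|lebesgue. \<bar>neg_part (u x)\<bar> powr p)
      \<le> (LINT x:\<Omega>|lebesgue. c * \<bar>neg_part (u x)\<bar> powr q + 2 powr p * h x)"
  proof (intro set_integral_mono w_int set_integral_add(1) set_integrable_mult_right h_set_int)
    fix x
    have "max (\<bar>neg_part (u x)\<bar> - M) 0 = max (- u x - M) 0"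
      using \<open>0 < M\<close> by (auto simp: neg_part_def)
    then show "\<bar>neg_part (u x)\<bar> powr p \<le> c * \<bar>neg_part (u x)\<bar> powr q + 2 powr p * h x"
      using powr_le_split_at_level[of "\<bar>neg_part (u x)\<bar>" M q p] \<open>0 < M\<close> \<open>0 < q\<close> \<open>q < p\<close>
      by (simp add: c_def h_def)
  qed (use \<open>0 < q\<close> \<open>q < p\<close> in auto)
  also have "\<dots> = c * (LINT x:\<Omega>|lebesgue. \<bar>neg_part (u x)\<bar> powr q)
      + 2 powr p * (LINT x:\<Omega>|lebesgue. h x)"
    using w_int[of q] h_set_int \<open>0 < q\<close> \<open>q < p\<close> by simp
  also have "\<dots> \<le> c * (LINT x:\<Omega>|lebesgue. \<bar>neg_part (u x)\<bar> powr q)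
      + 2 powr p * (K * enn2real (gagliardo s p u))"
  proof -
    have "(LINT x:\<Omega>|lebesgue. h x) \<le> (LINT x|lebesgue. h x)"
      using h_set_int h_int unfolding set_lebesgue_integral_def set_integrable_def
      by (intro integral_mono) (auto simp: indicator_def h_def)
    then show ?thesis
      using h_le by (intro add_left_mono mult_left_mono) auto
  qed
  finally show ?thesis
    by (simp add: c_def mult.assoc)
qed

lemma half_Xnorm_powr_le_Iminus:
  fixes u :: "'a::euclidean_space \<Rightarrow> real" and \<rho> s p :: real
  defines "K \<equiv> 2 * \<rho> powr (s * p) / unit_ball_vol DIM('a)"
  assumes "u \<in> Xsp s p \<Omega>" and "\<Omega> \<in> lmeasurable"
    and "0 < a" and "0 < q" and "q < p" and "0 < M" and "0 < \<rho>" and "0 \<le> s * p"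
    and M_small: "a / p * (2 powr p * M powr (p - q)) \<le> lam / q"
    and \<rho>_small: "a / p * (2 powr p * K) \<le> 1 / (2 * p)"
    and small: "emeasure lebesgue {x. u x < - M} \<le> ennreal (unit_ball_vol DIM('a) * \<rho> ^ DIM('a) / 2)"
  shows "Xnorm s p u powr p / (2 * p) \<le> Iminus s p q a lam \<Omega> u"
proof -
  define X where "X = enn2real (gagliardo s p u)"
  define Ap where "Ap = (LINT x:\<Omega>|lebesgue. \<bar>neg_part (u x)\<bar> powr p)"
  define Aq where "Aq = (LINT x:\<Omega>|lebesgue. \<bar>neg_part (u x)\<bar> powr q)"
  have "u \<in> borel_measurable lebesgue" and "(\<integral>\<^sup>+x. ennreal (\<bar>u x\<bar> powr p) \<partial>lebesgue) < \<infinity>"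
    and "gagliardo s p u < \<infinity>"
    using \<open>u \<in> Xsp s p \<Omega>\<close> unfolding Xsp_def by auto
  then have "Ap \<le> 2 powr p * M powr (p - q) * Aq + 2 powr p * K * X"
    unfolding Ap_def Aq_def X_def K_def using assms
    by (intro set_integral_neg_part_powr_le) auto
  then have "a / p * Ap \<le> a / p * (2 powr p * M powr (p - q) * Aq + 2 powr p * K * X)"
    using \<open>0 < a\<close> \<open>0 < q\<close> \<open>q < p\<close> by (intro mult_left_mono) auto
  also have "\<dots> = a / p * (2 powr p * M powr (p - q)) * Aq + a / p * (2 powr p * K) * X"
    by (simp add: algebra_simps)
  also have "\<dots> \<le> lam / q * Aq + 1 / (2 * p) * X"
  proof -
    have "0 \<le> Aq"
      unfolding Aq_def set_lebesgue_integral_def by (intro integral_nonneg_AE) auto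
    moreover have "0 \<le> X"
      unfolding X_def by simp
    ultimately show ?thesis
      using M_small \<rho>_small by (intro add_mono mult_right_mono)
  qed
  finally have "a / p * Ap \<le> lam / q * Aq + X / (2 * p)"
    by simp
  moreover have "Iminus s p q a lam \<Omega> u = X / p + lam / q * Aq - a / p * Ap"
    using \<open>0 < q\<close> \<open>q < p\<close> by (simp add: Iminus_def Xnorm_powr X_def Ap_def Aq_def)
  moreover have "X / p = X / (2 * p) + X / (2 * p)"
    by simp
  moreover have "Xnorm s p u powr p / (2 * p) = X / (2 * p)"
    using \<open>0 < q\<close> \<open>q < p\<close> by (simp add: Xnorm_powr X_def)
  ultimately show ?thesis
    by linarith
qed

lemma exists_absorbing_level_and_radius:
  fixes a p q lam \<sigma> w :: real
  assumes "0 < a" and "0 < q" and "q < p" and "0 < lam" and "0 < \<sigma>" and "0 < w"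
  obtains M \<rho> where "0 < M" and "0 < \<rho>"
    and "a / p * (2 powr p * M powr (p - q)) \<le> lam / q"
    and "a / p * (2 powr p * (2 * \<rho> powr \<sigma> / w)) \<le> 1 / (2 * p)"
proof -
  obtain M where "0 < M" and M: "M powr (p - q) = lam * p / (q * a * 2 powr p)"
    by (rule exists_pos_powr_eq[of "lam * p / (q * a * 2 powr p)" "p - q"]) (use assms in auto)
  obtain \<rho> where "0 < \<rho>" and \<rho>: "\<rho> powr \<sigma> = w / (4 * a * 2 powr p)"
    by (rule exists_pos_powr_eq[of "w / (4 * a * 2 powr p)" \<sigma>]) (use assms in auto)
  show ?thesis
    using assms by (intro that[OF \<open>0 < M\<close> \<open>0 < \<rho>\<close>]) (simp_all add: M \<rho>)
qed

lemma Xnorm_small_imp_emeasure_level_set_le: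
  fixes \<Omega> :: "'a::euclidean_space set"
  assumes "bounded \<Omega>" and "0 < M" and "0 < \<epsilon>" and "0 < p" and "0 \<le> s * p"
  obtains r where "0 < r"
    and "\<And>u. u \<in> Xsp s p \<Omega> \<Longrightarrow> Xnorm s p u < r
           \<Longrightarrow> emeasure lebesgue {x. u x < - M} \<le> ennreal \<epsilon>"
proof -
  obtain d where "0 < d" and \<Omega>_ball: "\<Omega> \<subseteq> ball 0 d"
    using bounded_subset_ballD[OF \<open>bounded \<Omega>\<close>] by blast
  define C where "C = 2 * (2 * d) powr (s * p) / unit_ball_vol DIM('a)"
  have "0 < C"
    using \<open>0 < d\<close> by (simp add: C_def)
  obtain r where "0 < r" and r: "r powr p = M powr p * \<epsilon> / C"
    by (rule exists_pos_powr_eq[of "M powr p * \<epsilon> / C" p])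
      (use \<open>0 < M\<close> \<open>0 < \<epsilon>\<close> \<open>0 < C\<close> \<open>0 < p\<close> in auto)
  show ?thesis
  proof (rule that[OF \<open>0 < r\<close>])
    fix u assume "u \<in> Xsp s p \<Omega>" and "Xnorm s p u < r"
    moreover have "0 \<le> Xnorm s p u"
      by (simp add: Xnorm_def)
    ultimately have "enn2real (gagliardo s p u) < r powr p"
      using \<open>0 < p\<close> powr_less_mono2[of p "Xnorm s p u" r] by (simp add: Xnorm_powr)
    then have "C * enn2real (gagliardo s p u) / M powr p \<le> C * r powr p / M powr p"
      using \<open>0 < C\<close> \<open>0 < M\<close> by (intro divide_right_mono mult_left_mono) auto
    also have "\<dots> = \<epsilon>"
      using \<open>0 < C\<close> \<open>0 < M\<close> by (simp add: r)
    finally have "C * enn2real (gagliardo s p u) / M powr p \<le> \<epsilon>" .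
    moreover have "emeasure lebesgue {x. u x < - M} \<le> ennreal (C * enn2real (gagliardo s p u) / M powr p)"
      unfolding C_def using \<open>u \<in> Xsp s p \<Omega>\<close> \<Omega>_ball \<open>0 < d\<close> assms
      by (intro emeasure_less_neg_level_le_gagliardo) simp_all
    ultimately show "emeasure lebesgue {x. u x < - M} \<le> ennreal \<epsilon>"
      by (metis ennreal_leI order.trans)
  qed
qed

theorem lemma4p7:
  fixes \<Omega> :: "'a::euclidean_space set"
    and s p q a lam :: real
  assumes "open \<Omega>" and "connected \<Omega>" and "\<Omega> \<noteq> {}" and "bounded \<Omega>"
    and "0 < s" and "s < 1" and "1 < p" and "s * p < real DIM('a)"
    and "0 < a" and "1 < q" and "q < p" and "0 < lam"
  shows "\<exists>r>0. \<forall>u\<in>Xsp s p \<Omega>. 0 < Xnorm s p u \<and> Xnorm s p u < r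
            \<longrightarrow> Iminus s p q a lam \<Omega> (\<lambda>x. 0) < Iminus s p q a lam \<Omega> u"
proof -
  have "0 < p" and "0 < q" and "0 < s * p"
    using assms by auto
  obtain M \<rho> where "0 < M" and "0 < \<rho>"
    and M_small: "a / p * (2 powr p * M powr (p - q)) \<le> lam / q"
    and \<rho>_small: "a / p * (2 powr p * (2 * \<rho> powr (s * p) / unit_ball_vol DIM('a))) \<le> 1 / (2 * p)"
    by (rule exists_absorbing_level_and_radius[of a q p lam "s * p" "unit_ball_vol DIM('a)"])
      (use assms \<open>0 < s * p\<close> in auto)
  obtain r where "0 < r" and level_set_small: "\<And>u. u \<in> Xsp s p \<Omega> \<Longrightarrow> Xnorm s p u < r
      \<Longrightarrow> emeasure lebesgue {x. u x < - M} \<le> ennreal (unit_ball_vol DIM('a) * \<rho> ^ DIM('a) / 2)"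
    by (rule Xnorm_small_imp_emeasure_level_set_le[OF \<open>bounded \<Omega>\<close> \<open>0 < M\<close>,
          where \<epsilon> = "unit_ball_vol DIM('a) * \<rho> ^ DIM('a) / 2" and s = s and p = p])
      (use \<open>0 < \<rho>\<close> \<open>0 < p\<close> \<open>0 < s * p\<close> in auto)
  show ?thesis
  proof (intro exI[of _ r] conjI ballI impI \<open>0 < r\<close>)
    fix u assume u: "u \<in> Xsp s p \<Omega>" and u_norm: "0 < Xnorm s p u \<and> Xnorm s p u < r"
    have "0 < Xnorm s p u powr p / (2 * p)"
      using u_norm \<open>0 < p\<close> by simp
    also have "\<dots> \<le> Iminus s p q a lam \<Omega> u"
      using level_set_small[OF u] u_norm
      by (intro half_Xnorm_powr_le_Iminus[OF u lmeasurable_open[OF \<open>bounded \<Omega>\<close> \<open>open \<Omega>\<close>]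
          \<open>0 < a\<close> \<open>0 < q\<close> \<open>q < p\<close> \<open>0 < M\<close> \<open>0 < \<rho>\<close> less_imp_le[OF \<open>0 < s * p\<close>]
          M_small \<rho>_small]) simp
    finally show "Iminus s p q a lam \<Omega> (\<lambda>x. 0) < Iminus s p q a lam \<Omega> u"
      by (simp add: Iminus_zero)
  qed
qed

end
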